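(* Let $\Gamma$ be a finitely generated group which is either amenable or of finite asymptotic dimension. Then $\Gamma$ is weighted hyperfinite, i.e. its Cayley graph with respect to any finite symmetric generating set is weighted hyperfinite.
   Context: A connected infinite graph $G$ with bounded vertex degrees is weighted hyperfinite if for every $\epsilon>0$ there is $K_\epsilon>0$ such that for every finite induced subgraph $L\subseteq G$ and every function $w:V(L)\to[0,\infty)$ there is a set $M\subseteq V(L)$ with $\sum_{x\in M}w(x)\le\epsilon\sum_{x\in V(L)}w(x)$ such that every connected component of the graph obtained from $L$ by deleting $M$ (and incident edges) has at most $K_\epsilon$ vertices. (This property is invariant under quasi-isometry, so it is independent of the generating set.) The Cayley graph of $\Gamma$ w.r.t. a finite symmetric generating set $S$ has vertex set $\Gamma$, with $x,y$ adjacent iff $x=sy$ for some $s\in S$. A graph $G$ has asymptotic dimension at most $d$ if for every $r>0$ there is $R=R(r)$ and vertex-disjoint induced subgraphs $\mathcal U_1,\dots,\mathcal U_d$ covering $V(G)$ such that for each $i$, each connected component of $\mathcal U_i$ has diameter at most $R$ and distinct components of $\mathcal U_i$ are at distance at least $r$ in $G$; a group has finite asymptotic dimension if its Cayley graph does (a quasi-isometry invariant). *)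

theory Defs
  imports Complex_Main "HOL-Algebra.Generated_Groups" "HOL-Algebra.Coset"
begin

definition reach_in :: "('a \<Rightarrow> 'a \<Rightarrow> bool) \<Rightarrow> 'a set \<Rightarrow> 'a \<Rightarrow> 'a \<Rightarrow> bool" where
  "reach_in E A = (\<lambda>a b. a \<in> A \<and> b \<in> A \<and> E a b)\<^sup>*\<^sup>*"

definition components :: "('a \<Rightarrow> 'a \<Rightarrow> bool) \<Rightarrow> 'a set \<Rightarrow> 'a set set" where
  "components E A = {{y. y \<in> A \<and> reach_in E A x y} | x. x \<in> A}"

definition gdist :: "('a \<Rightarrow> 'a \<Rightarrow> bool) \<Rightarrow> 'a \<Rightarrow> 'a \<Rightarrow> nat" where
  "gdist E x y = (LEAST n. (E ^^ n) x y)"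

definition weighted_hyperfinite :: "'a set \<Rightarrow> ('a \<Rightarrow> 'a \<Rightarrow> bool) \<Rightarrow> bool" where
  "weighted_hyperfinite V E \<longleftrightarrow>
    (\<forall>\<epsilon>::real. \<epsilon> > 0 \<longrightarrow> (\<exists>K::nat. K > 0 \<and>
      (\<forall>L. finite L \<and> L \<subseteq> V \<longrightarrow> (\<forall>w::'a \<Rightarrow> real. (\<forall>x\<in>L. 0 \<le> w x) \<longrightarrow>
        (\<exists>M \<subseteq> L. (\<Sum>x\<in>M. w x) \<le> \<epsilon> * (\<Sum>x\<in>L. w x) \<and>
                 (\<forall>C \<in> components E (L - M). card C \<le> K))))))"

definition asdim_le :: "'a set \<Rightarrow> ('a \<Rightarrow> 'a \<Rightarrow> bool) \<Rightarrow> nat \<Rightarrow> bool" where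
  "asdim_le V E d \<longleftrightarrow>
    (\<forall>r::nat. r > 0 \<longrightarrow> (\<exists>R::nat. \<exists>U :: nat \<Rightarrow> 'a set.
       (\<Union>i<d. U i) = V \<and>
       (\<forall>i<d. \<forall>j<d. i \<noteq> j \<longrightarrow> U i \<inter> U j = {}) \<and>
       (\<forall>i<d. (\<forall>C \<in> components E (U i). \<forall>x\<in>C. \<forall>y\<in>C. gdist E x y \<le> R) \<and>
              (\<forall>C1 \<in> components E (U i). \<forall>C2 \<in> components E (U i). C1 \<noteq> C2 \<longrightarrow>
                  (\<forall>x\<in>C1. \<forall>y\<in>C2. r \<le> gdist E x y)))))"

definition cayley_adj :: "('a, 'b) monoid_scheme \<Rightarrow> 'a set \<Rightarrow> 'a \<Rightarrow> 'a \<Rightarrow> bool" where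
  "cayley_adj G S x y \<longleftrightarrow> x \<in> carrier G \<and> y \<in> carrier G \<and> (\<exists>s\<in>S. x = s \<otimes>\<^bsub>G\<^esub> y)"

definition fin_sym_gen_set :: "('a, 'b) monoid_scheme \<Rightarrow> 'a set \<Rightarrow> bool" where
  "fin_sym_gen_set G S \<longleftrightarrow> finite S \<and> S \<subseteq> carrier G \<and> (\<forall>s\<in>S. inv\<^bsub>G\<^esub> s \<in> S)
     \<and> generate G S = carrier G"

definition finitely_generated :: "('a, 'b) monoid_scheme \<Rightarrow> bool" where
  "finitely_generated G \<longleftrightarrow> (\<exists>S. finite S \<and> S \<subseteq> carrier G \<and> generate G S = carrier G)"

definition amenable :: "('a, 'b) monoid_scheme \<Rightarrow> bool" where
  "amenable G \<longleftrightarrow> (\<exists>\<mu> :: 'a set \<Rightarrow> real.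
     \<mu> (carrier G) = 1 \<and>
     (\<forall>A. A \<subseteq> carrier G \<longrightarrow> 0 \<le> \<mu> A) \<and>
     (\<forall>A B. A \<subseteq> carrier G \<and> B \<subseteq> carrier G \<and> A \<inter> B = {} \<longrightarrow> \<mu> (A \<union> B) = \<mu> A + \<mu> B) \<and>
     (\<forall>g\<in>carrier G. \<forall>A. A \<subseteq> carrier G \<longrightarrow> \<mu> (g <#\<^bsub>G\<^esub> A) = \<mu> A))"

definition finite_asdim :: "('a, 'b) monoid_scheme \<Rightarrow> bool" where
  "finite_asdim G \<longleftrightarrow> (\<exists>S d. fin_sym_gen_set G S \<and> asdim_le (carrier G) (cayley_adj G S) d)"

end

theory Submission
  imports Defs "HOL-Library.Countable_Set" "HOL-Library.Disjoint_Sets" "HOL-Library.Diagonal_Subsequence"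
begin

(* A Folner set F (small inner boundary, ratio delta) gives cuts of weight ratio
   delta into pieces of size at most |F|: by double counting, some right translate F g meeting L
   carries at most a delta-fraction of its weight on the translated boundary; removing that
   boundary isolates the rest of F g, and one recurses on the remainder of L (folner_cut).
   Folner sets exist because the invariant mean of an amenable group forbids "doublings": if no
   Folner set of ratio delta existed, balls in the word metric would expand every finite set
   geometrically, giving a finite set C with |C F| >= 2|F| for all finite F; Hall's marriage
   theorem turns this into injective 2-to-1 translation maps on balls, a diagonal argument into
   one on all of G, and finite additivity plus invariance of the mean make that contradictory.

   Given a d-colour cover by uniformly bounded, well separated
   pieces (for a generating set S0, which is bi-Lipschitz equivalent to S), remove around every
   colour class the lightest of m distance layers; this costs d/m of the weight, and each
   remaining component stays near a single piece of the cover, hence inside a ball of fixed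
   radius (layered_cut_components). *)

lemma components_subset: "C \<in> components E A \<Longrightarrow> C \<subseteq> A"
  unfolding components_def by auto

lemma reach_in_mono:
  assumes "reach_in E A x y" "A \<subseteq> B"
  shows "reach_in E B x y"
  using assms(1) unfolding reach_in_def
proof (induction rule: rtranclp_induct)
  case (step y z)
  then show ?case using assms(2) by (simp add: rtranclp.rtrancl_into_rtrancl subset_iff)
qed simp

lemma reach_in_separated:
  assumes sep: "\<forall>x\<in>A1. \<forall>y\<in>A2. \<not> E x y \<and> \<not> E y x" and "x \<in> A1"
    and "reach_in E (A1 \<union> A2) x y"
  shows "reach_in E A1 x y \<and> y \<in> A1"
  using assms(3) unfolding reach_in_def
proof (induction rule: rtranclp_induct)
  case (step y z)
  then have "z \<in> A1" using sep by blast
  with step show ?case by (auto intro: rtranclp.rtrancl_into_rtrancl)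
qed (use \<open>x \<in> A1\<close> in simp)

lemma component_of_separated:
  assumes sep: "\<forall>x\<in>A1. \<forall>y\<in>A2. \<not> E x y \<and> \<not> E y x" and x: "x \<in> A1"
  shows "{y. y \<in> A1 \<union> A2 \<and> reach_in E (A1 \<union> A2) x y} \<in> components E A1"
proof -
  have "{y. y \<in> A1 \<union> A2 \<and> reach_in E (A1 \<union> A2) x y} = {y. y \<in> A1 \<and> reach_in E A1 x y}"
    using reach_in_separated[OF sep x] reach_in_mono[of E A1 x _ "A1 \<union> A2"] by blast
  then show ?thesis unfolding components_def using x by blast
qed

lemma components_separated_union:
  assumes sep: "\<forall>x\<in>A1. \<forall>y\<in>A2. \<not> E x y \<and> \<not> E y x" and C: "C \<in> components E (A1 \<union> A2)"
  shows "C \<in> components E A1 \<or> C \<in> components E A2"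
proof -
  obtain x where x: "x \<in> A1 \<union> A2" and C_eq: "C = {y. y \<in> A1 \<union> A2 \<and> reach_in E (A1 \<union> A2) x y}"
    using C unfolding components_def by auto
  have sep': "\<forall>x\<in>A2. \<forall>y\<in>A1. \<not> E x y \<and> \<not> E y x" using sep by blast
  show ?thesis
    using x component_of_separated[OF sep, of x] component_of_separated[OF sep', of x]
    unfolding C_eq by (auto simp: Un_commute)
qed

lemma gdist_le: "(R ^^ n) x y \<Longrightarrow> gdist R x y \<le> n"
  unfolding gdist_def by (rule Least_le)

lemma gdist_path: "\<exists>n. (R ^^ n) x y \<Longrightarrow> (R ^^ gdist R x y) x y"
  unfolding gdist_def by (rule LeastI_ex)

lemma sum_UN_le_nonneg:
  fixes w :: "'a \<Rightarrow> real"
  assumes "finite I" "\<forall>i\<in>I. finite (A i)" "\<forall>x\<in>\<Union>(A ` I). 0 \<le> w x"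
  shows "sum w (\<Union>(A ` I)) \<le> (\<Sum>i\<in>I. sum w (A i))"
  using assms
proof (induction I rule: finite_induct)
  case (insert i I)
  have "sum w (A i \<union> \<Union>(A ` I)) \<le> sum w (A i) + sum w (\<Union>(A ` I))"
    using insert by (subst sum_Un) (auto intro!: sum_nonneg)
  then show ?case using insert by simp
qed simp

definition hall_condition :: "'i set \<Rightarrow> ('i \<Rightarrow> 'x set) \<Rightarrow> bool" where
  "hall_condition I A \<longleftrightarrow> (\<forall>J\<subseteq>I. card J \<le> card (\<Union>(A ` J)))"

lemma hall_condition_subset: "hall_condition I A \<Longrightarrow> I' \<subseteq> I \<Longrightarrow> hall_condition I' A"
  unfolding hall_condition_def by blast

lemma hall_condition_remove_critical:
  assumes I: "finite I" "\<forall>i\<in>I. finite (A i)" and hall: "hall_condition I A"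
    and J: "J \<subseteq> I" "card J = card (\<Union>(A ` J))"
  shows "hall_condition (I - J) (\<lambda>i. A i - \<Union>(A ` J))"
  unfolding hall_condition_def
proof (intro allI impI)
  fix K assume K: "K \<subseteq> I - J"
  have fI: "finite (\<Union>(A ` I))" using I by blast
  have fin: "finite K" "finite J" "finite (\<Union>(A ` J))" "finite (\<Union>i\<in>K. A i - \<Union>(A ` J))"
    using K J(1) by (auto intro: finite_subset[OF _ fI] finite_subset[OF _ I(1)])
  have "card K + card J = card (K \<union> J)" using K fin by (subst card_Un_disjoint) auto
  also have "\<dots> \<le> card (\<Union>(A ` (K \<union> J)))" using hall K J(1) unfolding hall_condition_def by blast
  also have "\<Union>(A ` (K \<union> J)) = (\<Union>i\<in>K. A i - \<Union>(A ` J)) \<union> \<Union>(A ` J)" by blast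
  also have "card \<dots> = card (\<Union>i\<in>K. A i - \<Union>(A ` J)) + card J"
    using fin J(2) by (subst card_Un_disjoint) auto
  finally show "card K \<le> card (\<Union>i\<in>K. A i - \<Union>(A ` J))" by simp
qed

lemma hall_condition_remove_point:
  assumes strict: "\<forall>J\<subseteq>I. J \<noteq> {} \<longrightarrow> J \<noteq> I \<longrightarrow> card J < card (\<Union>(A ` J))" and "i0 \<in> I"
  shows "hall_condition (I - {i0}) (\<lambda>i. A i - {x})"
  unfolding hall_condition_def
proof (intro allI impI)
  fix K assume K: "K \<subseteq> I - {i0}"
  show "card K \<le> card (\<Union>i\<in>K. A i - {x})"
  proof (cases "K = {}")
    case False
    then have "card K < card (\<Union>(A ` K))" using strict K \<open>i0 \<in> I\<close> by blast
    then have "card K \<le> card (\<Union>(A ` K)) - 1" by linarith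
    also have "\<dots> \<le> card (\<Union>(A ` K) - {x})" by (simp add: card_Diff_singleton_if)
    also have "\<Union>(A ` K) - {x} = (\<Union>i\<in>K. A i - {x})" by blast
    finally show ?thesis .
  qed simp
qed

lemma inj_on_glue:
  assumes "inj_on f1 J" "f1 ` J \<subseteq> U" "inj_on f2 (I - J)" "f2 ` (I - J) \<inter> U = {}"
  shows "inj_on (\<lambda>i. if i \<in> J then f1 i else f2 i) I"
  using assms unfolding inj_on_def by (smt (verit) DiffI disjoint_iff image_eqI subsetD)

theorem hall_finite:
  assumes "finite I" "\<forall>i\<in>I. finite (A i)" "hall_condition I A"
  shows "\<exists>f. (\<forall>i\<in>I. f i \<in> A i) \<and> inj_on f I"
  using assms
proof (induction "card I" arbitrary: I A rule: less_induct)
  case less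
  note fin = less.prems(1,2) and hall = less.prems(3)
  show ?case
  proof (cases "\<exists>J\<subseteq>I. J \<noteq> {} \<and> J \<noteq> I \<and> card J = card (\<Union>(A ` J))")
    case True
    text \<open>A critical proper subset J: match J inside its neighbourhood, the rest outside it.\<close>
    then obtain J where J: "J \<subseteq> I" "J \<noteq> {}" "J \<noteq> I" "card J = card (\<Union>(A ` J))" by blast
    have fJ: "finite J" using J(1) fin(1) by (rule finite_subset)
    have "card J < card I" using J(1,3) fin(1) by (simp add: psubset_card_mono)
    then obtain f1 where f1: "\<forall>i\<in>J. f1 i \<in> A i" "inj_on f1 J"
      using less.hyps[OF _ fJ] fin(2) J(1) hall_condition_subset[OF hall J(1)] by blast
    have "0 < card J" "card J \<le> card I" using fJ J(1,2) fin(1) by (auto simp: card_mono)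
    then have "card (I - J) < card I" using card_Diff_subset[OF fJ J(1)] by linarith
    then obtain f2 where f2: "\<forall>i\<in>I - J. f2 i \<in> A i - \<Union>(A ` J)" "inj_on f2 (I - J)"
      using less.hyps[OF _ _ _ hall_condition_remove_critical[OF fin hall J(1,4)]] fin by blast
    have "inj_on (\<lambda>i. if i \<in> J then f1 i else f2 i) I"
      by (rule inj_on_glue[where U = "\<Union>(A ` J)"]) (use f1 f2 in auto)
    then show ?thesis using f1(1) f2(1) by (intro exI[of _ "\<lambda>i. if i \<in> J then f1 i else f2 i"]) auto
  next
    case no_critical: False
    text \<open>Every proper subset has slack: match any i0 arbitrarily, the rest avoiding that value.\<close>
    show ?thesis
    proof (cases "I = {}")
      case False
      then obtain i0 where i0: "i0 \<in> I" by blast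
      have strict: "\<forall>J\<subseteq>I. J \<noteq> {} \<longrightarrow> J \<noteq> I \<longrightarrow> card J < card (\<Union>(A ` J))"
        using no_critical hall unfolding hall_condition_def by (meson le_neq_implies_less)
      have "card {i0} \<le> card (A i0)" using hall i0 unfolding hall_condition_def by force
      then obtain x where x: "x \<in> A i0" by fastforce
      have "card (I - {i0}) < card I" using fin(1) i0 by (rule card_Diff1_less)
      then obtain f2 where f2: "\<forall>i\<in>I - {i0}. f2 i \<in> A i - {x}" "inj_on f2 (I - {i0})"
        using less.hyps[of "I - {i0}" "\<lambda>i. A i - {x}"] fin hall_condition_remove_point[OF strict i0]
        by auto
      have "inj_on (\<lambda>i. if i \<in> {i0} then x else f2 i) I"
        by (rule inj_on_glue[where U = "{x}"]) (use f2 in auto)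
      then show ?thesis using x f2(1) by (intro exI[of _ "\<lambda>i. if i \<in> {i0} then x else f2 i"]) auto
    qed simp
  qed
qed

context group
begin

lemma mem_r_coset_iff:
  assumes "B \<subseteq> carrier G" "g \<in> carrier G" "x \<in> carrier G"
  shows "x \<in> B #> g \<longleftrightarrow> (\<exists>b\<in>B. g = inv b \<otimes> x)"
  using assms inv_solve_left unfolding r_coset_def by blast

lemma card_r_coset: "B \<subseteq> carrier G \<Longrightarrow> g \<in> carrier G \<Longrightarrow> card (B #> g) = card B"
  by (metis card_rcosets_equal rcosetsI)

lemma card_le_r_coset:
  assumes "finite B" "B \<subseteq> carrier G" "g \<in> carrier G" "C \<subseteq> B #> g"
  shows "card C \<le> card B"
proof -
  have "finite (B #> g)" unfolding r_coset_def using assms(1) by blast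
  then show ?thesis using card_mono[OF _ assms(4)] card_r_coset[OF assms(2,3)] by simp
qed

lemma finite_set_mult: "finite H \<Longrightarrow> finite K \<Longrightarrow> finite (H <#> K)"
  unfolding set_mult_def by simp

end

locale cayley = group G for G (structure) +
  fixes S :: "'a set"
  assumes fin_sym_gen: "fin_sym_gen_set G S"
begin

abbreviation E :: "'a \<Rightarrow> 'a \<Rightarrow> bool" where "E \<equiv> cayley_adj G S"

lemma gens_finite: "finite S" and gens_carrier: "S \<subseteq> carrier G"
  and gens_inv: "s \<in> S \<Longrightarrow> inv s \<in> S" and gens_generate: "generate G S = carrier G"
  using fin_sym_gen unfolding fin_sym_gen_set_def by auto

lemma adj_carrier: "E x y \<Longrightarrow> x \<in> carrier G \<and> y \<in> carrier G"
  unfolding cayley_adj_def by auto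

lemma adj_sym: "E x y \<Longrightarrow> E y x"
proof -
  assume "E x y"
  then obtain s where s: "s \<in> S" "x = s \<otimes> y" "x \<in> carrier G" "y \<in> carrier G"
    unfolding cayley_adj_def by auto
  then have "y = inv s \<otimes> x" using gens_carrier by (auto simp: m_assoc[symmetric])
  then show "E y x" using s gens_inv unfolding cayley_adj_def by auto
qed

lemma adjpow_sym: "(E ^^ n) x y \<Longrightarrow> (E ^^ n) y x"
proof (induction n arbitrary: x y)
  case (Suc n)
  then obtain z where "(E ^^ n) x z" "E z y" by (auto elim: relpowp_Suc_E)
  then show ?case using Suc.IH adj_sym relpowp_Suc_I2 by metis
qed simp

lemma adjpow_carrier: "(E ^^ n) x y \<Longrightarrow> x \<in> carrier G \<Longrightarrow> y \<in> carrier G"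
  by (induction n arbitrary: y) (auto elim: relpowp_Suc_E dest: adj_carrier)

lemma adj_right_mult: "E x y \<Longrightarrow> z \<in> carrier G \<Longrightarrow> E (x \<otimes> z) (y \<otimes> z)"
  unfolding cayley_adj_def using gens_carrier by (auto simp: m_assoc) (metis m_assoc subsetD)

lemma adjpow_right_mult: "(E ^^ n) x y \<Longrightarrow> z \<in> carrier G \<Longrightarrow> (E ^^ n) (x \<otimes> z) (y \<otimes> z)"
proof (induction n arbitrary: y)
  case (Suc n)
  then obtain u where "(E ^^ n) x u" "E u y" by (auto elim: relpowp_Suc_E)
  then show ?case using Suc adj_right_mult relpowp_Suc_I by metis
qed simp

lemma path_to_one: "g \<in> carrier G \<Longrightarrow> \<exists>k. (E ^^ k) g \<one>"
proof -
  assume "g \<in> carrier G"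
  then have "g \<in> generate G S" using gens_generate by simp
  then show ?thesis
  proof (induction rule: generate.induct)
    case one
    then show ?case by (metis relpowp_0_I)
  next
    case (incl h)
    then have "E h \<one>" using gens_carrier unfolding cayley_adj_def by force
    then show ?case by (metis relpowp_1)
  next
    case (inv h)
    then have "E (inv h) \<one>" using gens_carrier gens_inv unfolding cayley_adj_def by force
    then show ?case by (metis relpowp_1)
  next
    case (eng h1 h2)
    then obtain k1 k2 where k: "(E ^^ k1) h1 \<one>" "(E ^^ k2) h2 \<one>" by blast
    have "h1 \<in> carrier G" "h2 \<in> carrier G" using eng.hyps gens_generate by auto
    then have "(E ^^ k1) (h1 \<otimes> h2) h2" using adjpow_right_mult[OF k(1)] by simp
    then show ?case using k(2) relpowp_trans by metis
  qed
qed

lemma connected: "x \<in> carrier G \<Longrightarrow> y \<in> carrier G \<Longrightarrow> \<exists>k. (E ^^ k) x y"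
  using path_to_one[of x] path_to_one[of y] adjpow_sym relpowp_trans by metis

lemma sphere_finite: "finite {y. (E ^^ n) a y} \<and> card {y. (E ^^ n) a y} \<le> card S ^ n"
proof (induction n)
  case (Suc n)
  let ?B = "{y. (E ^^ n) a y}"
  have nbhd: "{y. E z y} \<subseteq> (\<lambda>s. s \<otimes> z) ` S" for z
    using adj_sym unfolding cayley_adj_def by blast
  then have fz: "finite {y. E z y} \<and> card {y. E z y} \<le> card S" for z
    using gens_finite by (meson card_image_le finite_imageI finite_subset order_trans card_mono)
  have eq: "{y. (E ^^ Suc n) a y} = (\<Union>z\<in>?B. {y. E z y})"
    by (auto elim: relpowp_Suc_E intro: relpowp_Suc_I)
  have "card (\<Union>z\<in>?B. {y. E z y}) \<le> (\<Sum>z\<in>?B. card {y. E z y})"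
    using Suc by (simp add: card_UN_le)
  also have "\<dots> \<le> card ?B * card S" using fz sum_mono[of ?B "\<lambda>z. card {y. E z y}" "\<lambda>_. card S"] by simp
  also have "\<dots> \<le> card S ^ Suc n" using Suc by (simp add: mult.commute)
  finally show ?case unfolding eq using Suc fz by blast
qed simp

definition ball :: "'a \<Rightarrow> nat \<Rightarrow> 'a set" where
  "ball a \<rho> = {y. \<exists>j\<le>\<rho>. (E ^^ j) a y}"

lemma ball_finite: "finite (ball a \<rho>)" and card_ball_le: "card (ball a \<rho>) \<le> (\<Sum>j\<le>\<rho>. card S ^ j)"
proof -
  have eq: "ball a \<rho> = (\<Union>j\<le>\<rho>. {y. (E ^^ j) a y})" unfolding ball_def by auto
  show "finite (ball a \<rho>)" unfolding eq using sphere_finite by auto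
  have "card (ball a \<rho>) \<le> (\<Sum>j\<le>\<rho>. card {y. (E ^^ j) a y})" unfolding eq by (rule card_UN_le) simp
  also have "\<dots> \<le> (\<Sum>j\<le>\<rho>. card S ^ j)" using sphere_finite by (simp add: sum_mono)
  finally show "card (ball a \<rho>) \<le> (\<Sum>j\<le>\<rho>. card S ^ j)" .
qed

lemma ball_carrier: "a \<in> carrier G \<Longrightarrow> ball a n \<subseteq> carrier G"
  unfolding ball_def using adjpow_carrier by blast

lemma ball_mono: "n \<le> n' \<Longrightarrow> ball a n \<subseteq> ball a n'"
  unfolding ball_def using le_trans by blast

lemma in_some_ball: "y \<in> carrier G \<Longrightarrow> \<exists>n. y \<in> ball \<one> n"
  using connected[of \<one> y] unfolding ball_def by auto

lemma countable_carrier: "countable (carrier G)"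
proof -
  have "carrier G \<subseteq> (\<Union>n. ball \<one> n)" using in_some_ball by blast
  moreover have "countable (\<Union>n. ball \<one> n)"
    by (rule countable_UN) (auto intro: countable_finite ball_finite)
  ultimately show ?thesis by (rule countable_subset)
qed

definition boundary :: "'a set \<Rightarrow> 'a set" where
  "boundary F = {x\<in>F. \<exists>s\<in>S. s \<otimes> x \<notin> F}"

definition folner_set :: "real \<Rightarrow> 'a set \<Rightarrow> bool" where
  "folner_set \<delta> F \<longleftrightarrow> finite F \<and> F \<subseteq> carrier G \<and> F \<noteq> {} \<and> real (card (boundary F)) \<le> \<delta> * real (card F)"

text \<open>Double counting: as g ranges over all right translations meeting L, every point of L is
  covered by exactly card B of the translates B g.\<close>
lemma sum_over_translates:
  fixes w :: "'a \<Rightarrow> real"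
  assumes L: "finite L" "L \<subseteq> carrier G" and B: "B \<subseteq> carrier G"
    and T: "finite T" "T \<subseteq> carrier G" "\<And>x b. x \<in> L \<Longrightarrow> b \<in> B \<Longrightarrow> inv b \<otimes> x \<in> T"
  shows "(\<Sum>g\<in>T. sum w ((B #> g) \<inter> L)) = real (card B) * sum w L"
proof -
  have hits: "{g\<in>T. x \<in> B #> g} = (\<lambda>b. inv b \<otimes> x) ` B" if x: "x \<in> L" for x
    using mem_r_coset_iff[OF B] T x L by (auto simp: subset_iff)
  have inj: "inj_on (\<lambda>b. inv b \<otimes> x) B" if "x \<in> carrier G" for x
    using that B by (intro inj_onI) (metis inv_closed inv_inv right_cancel subsetD)
  have "(\<Sum>g\<in>T. sum w ((B #> g) \<inter> L)) = (\<Sum>g\<in>T. \<Sum>x\<in>L. if x \<in> B #> g then w x else 0)"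
    using L(1) by (simp add: sum.inter_restrict Int_commute)
  also have "\<dots> = (\<Sum>x\<in>L. \<Sum>g\<in>T. if x \<in> B #> g then w x else 0)" by (rule sum.swap)
  also have "\<dots> = (\<Sum>x\<in>L. w x * real (card {g\<in>T. x \<in> B #> g}))"
    using T(1) by (simp add: sum.inter_filter[symmetric] mult.commute)
  also have "\<dots> = (\<Sum>x\<in>L. w x * real (card B))"
    using hits inj L(2) by (intro sum.cong) (auto simp: card_image subset_iff)
  finally show ?thesis by (simp add: sum_distrib_right mult.commute)
qed

text \<open>Averaging: if F is a Folner set with boundary ratio \<delta>, some translate of F meeting L
  has boundary carrying at most a \<delta>-fraction of its weight.\<close>
lemma good_translate:
  fixes w :: "'a \<Rightarrow> real"
  assumes folner: "folner_set \<delta> F"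
    and L: "finite L" "L \<subseteq> carrier G" "L \<noteq> {}" and w: "\<forall>x\<in>L. 0 \<le> w x"
  shows "\<exists>g\<in>carrier G. (F #> g) \<inter> L \<noteq> {} \<and>
           sum w ((boundary F #> g) \<inter> L) \<le> \<delta> * sum w ((F #> g) \<inter> L)"
proof (rule ccontr)
  assume no_good: "\<not> ?thesis"
  have F: "finite F" "F \<subseteq> carrier G" "F \<noteq> {}" and bd: "real (card (boundary F)) \<le> \<delta> * real (card F)"
    using folner unfolding folner_set_def by auto
  define T where "T = (\<Union>x\<in>L. \<Union>f\<in>F. {inv f \<otimes> x})"
  have T: "finite T" "T \<subseteq> carrier G" "T \<noteq> {}" "\<And>x f. x \<in> L \<Longrightarrow> f \<in> F \<Longrightarrow> inv f \<otimes> x \<in> T"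
    unfolding T_def using L F by (auto simp: subset_iff)
  have meets: "(F #> g) \<inter> L \<noteq> {}" if "g \<in> T" for g
  proof -
    obtain x f where "x \<in> L" "f \<in> F" "g = inv f \<otimes> x" using \<open>g \<in> T\<close> unfolding T_def by blast
    then have "x \<in> F #> g" using mem_r_coset_iff[OF F(2)] T(2) L(2) \<open>g \<in> T\<close> by blast
    then show ?thesis using \<open>x \<in> L\<close> by blast
  qed
  have strict: "\<delta> * sum w ((F #> g) \<inter> L) < sum w ((boundary F #> g) \<inter> L)" if "g \<in> T" for g
  proof -
    have "g \<in> carrier G" using that T(2) by blast
    then show ?thesis using no_good meets[OF that] by (auto simp: not_le)
  qed
  have bdF: "boundary F \<subseteq> F" unfolding boundary_def by blast
  have "\<delta> * (real (card F) * sum w L) = \<delta> * (\<Sum>g\<in>T. sum w ((F #> g) \<inter> L))"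
    using sum_over_translates[OF L(1,2) F(2) T(1,2,4)] by simp
  also have "\<dots> = (\<Sum>g\<in>T. \<delta> * sum w ((F #> g) \<inter> L))" by (rule sum_distrib_left)
  also have "\<dots> < (\<Sum>g\<in>T. sum w ((boundary F #> g) \<inter> L))"
    using strict by (rule sum_strict_mono[OF T(1,3)])
  also have "\<dots> = real (card (boundary F)) * sum w L"
    by (rule sum_over_translates[OF L(1,2) _ T(1,2)]) (use bdF F(2) T(4) in auto)
  also have "\<dots> \<le> \<delta> * real (card F) * sum w L"
    using bd w by (intro mult_right_mono sum_nonneg) auto
  finally show False by (simp add: mult.assoc)
qed

lemma interior_translate_isolated:
  assumes F: "F \<subseteq> carrier G" and g: "g \<in> carrier G"
    and y: "y \<in> F #> g" "y \<notin> boundary F #> g" and z: "z \<notin> F #> g"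
  shows "\<not> E y z \<and> \<not> E z y"
proof -
  have "\<not> E z y"
  proof
    assume "E z y"
    then obtain s where s: "s \<in> S" "z = s \<otimes> y" unfolding cayley_adj_def by auto
    obtain f where f: "f \<in> F" "y = f \<otimes> g" using y(1) unfolding r_coset_def by blast
    have "f \<notin> boundary F" using y(2) f F g by (auto simp: r_coset_def)
    then have "s \<otimes> f \<in> F" using f(1) s(1) unfolding boundary_def by blast
    moreover have "z = (s \<otimes> f) \<otimes> g" using s f F g gens_carrier by (auto simp: m_assoc subset_iff)
    ultimately show False using z F g gens_carrier s(1) by (auto simp: r_coset_def)
  qed
  then show ?thesis using adj_sym by blast
qed

text \<open>A Folner set with boundary ratio \<delta> yields, for every finite weighted L, a cut of relative
  weight \<delta> into pieces no larger than F: cut out a good translate along its boundary and recurse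
  on the rest of L.\<close>
lemma folner_cut:
  assumes folner: "folner_set \<delta> F"
  shows "finite L \<Longrightarrow> L \<subseteq> carrier G \<Longrightarrow> \<forall>x\<in>L. 0 \<le> w x \<Longrightarrow>
     \<exists>M\<subseteq>L. sum w M \<le> \<delta> * sum w L \<and> (\<forall>C\<in>components E (L - M). card C \<le> card F)"
proof (induction "card L" arbitrary: L rule: less_induct)
  case less
  have F: "finite F" "F \<subseteq> carrier G" using folner unfolding folner_set_def by auto
  show ?case
  proof (cases "L = {}")
    case False
    obtain g where g: "g \<in> carrier G" "(F #> g) \<inter> L \<noteq> {}"
      and gle: "sum w ((boundary F #> g) \<inter> L) \<le> \<delta> * sum w ((F #> g) \<inter> L)"
      using good_translate[OF folner less.prems(1,2) False less.prems(3)] by blast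
    define P where "P = (F #> g) \<inter> L"
    define Q where "Q = (boundary F #> g) \<inter> L"
    have QP: "Q \<subseteq> P" unfolding P_def Q_def r_coset_def boundary_def by blast
    have fin: "finite P" "finite Q" "finite (L - P)" using less.prems(1) QP unfolding P_def
      by (auto intro: finite_subset)
    have "card (L - P) < card L"
      using g(2) less.prems(1) unfolding P_def by (intro psubset_card_mono) auto
    then obtain M' where M': "M' \<subseteq> L - P" "sum w M' \<le> \<delta> * sum w (L - P)"
        "\<forall>C\<in>components E (L - P - M'). card C \<le> card F"
      using less.hyps[of "L - P"] less.prems by blast
    have "sum w (M' \<union> Q) = sum w M' + sum w Q"
      using M'(1) QP fin by (intro sum.union_disjoint) (auto intro: finite_subset)
    also have "\<dots> \<le> \<delta> * sum w (L - P) + \<delta> * sum w P" using M'(2) gle unfolding P_def Q_def by simp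
    also have "\<dots> = \<delta> * sum w L"
      using sum.subset_diff[of P L w] less.prems(1) unfolding P_def by (simp add: distrib_left)
    finally have weight: "sum w (M' \<union> Q) \<le> \<delta> * sum w L" .
    have split: "L - (M' \<union> Q) = (P - Q) \<union> (L - P - M')" using M'(1) QP unfolding P_def by blast
    have sep: "\<forall>y\<in>P - Q. \<forall>z\<in>L - P - M'. \<not> E y z \<and> \<not> E z y"
      using interior_translate_isolated[OF F(2) g(1)] unfolding P_def Q_def by blast
    have "card C \<le> card F" if "C \<in> components E (P - Q)" for C
      using card_le_r_coset[OF F g(1)] components_subset[OF that] unfolding P_def by blast
    then have "\<forall>C\<in>components E (L - (M' \<union> Q)). card C \<le> card F"
      using M'(3) components_separated_union[OF sep] unfolding split by blast
    moreover have "M' \<union> Q \<subseteq> L" using M'(1) QP unfolding P_def by blast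
    ultimately show ?thesis using weight by blast
  qed (simp add: components_def)
qed

end

locale invariant_mean = group G for G (structure) +
  fixes \<mu> :: "'a set \<Rightarrow> real"
  assumes mean_total: "\<mu> (carrier G) = 1"
    and mean_nonneg: "A \<subseteq> carrier G \<Longrightarrow> 0 \<le> \<mu> A"
    and mean_additive: "A \<subseteq> carrier G \<Longrightarrow> B \<subseteq> carrier G \<Longrightarrow> A \<inter> B = {} \<Longrightarrow> \<mu> (A \<union> B) = \<mu> A + \<mu> B"
    and mean_invariant: "g \<in> carrier G \<Longrightarrow> A \<subseteq> carrier G \<Longrightarrow> \<mu> (g <# A) = \<mu> A"

lemma amenable_invariant_mean:
  fixes G :: "('a, 'b) monoid_scheme"
  assumes "group G" "amenable G"
  shows "\<exists>\<mu>. invariant_mean G \<mu>"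
proof -
  obtain \<mu> :: "'a set \<Rightarrow> real" where \<mu>: "\<mu> (carrier G) = 1"
    "\<forall>A. A \<subseteq> carrier G \<longrightarrow> 0 \<le> \<mu> A"
    "\<forall>A B. A \<subseteq> carrier G \<and> B \<subseteq> carrier G \<and> A \<inter> B = {} \<longrightarrow> \<mu> (A \<union> B) = \<mu> A + \<mu> B"
    "\<forall>g\<in>carrier G. \<forall>A. A \<subseteq> carrier G \<longrightarrow> \<mu> (g <#\<^bsub>G\<^esub> A) = \<mu> A"
    using assms(2) unfolding amenable_def by (elim exE conjE)
  have "invariant_mean G \<mu>"
    by (intro invariant_mean.intro assms(1) invariant_mean_axioms.intro) (use \<mu> in auto)
  then show ?thesis by blast
qed

context invariant_mean
begin

lemma mean_mono:
  assumes "A \<subseteq> B" "B \<subseteq> carrier G"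
  shows "\<mu> A \<le> \<mu> B"
proof -
  have "A \<subseteq> carrier G" "B - A \<subseteq> carrier G" "A \<union> (B - A) = B" using assms by auto
  then have "\<mu> B = \<mu> A + \<mu> (B - A)" using mean_additive[of A "B - A"] by auto
  then show ?thesis using mean_nonneg[of "B - A"] \<open>B - A \<subseteq> carrier G\<close> by simp
qed

lemma mean_disjoint_family:
  "finite I \<Longrightarrow> disjoint_family_on X I \<Longrightarrow> (\<And>j. j \<in> I \<Longrightarrow> X j \<subseteq> carrier G) \<Longrightarrow>
     \<mu> (\<Union>j\<in>I. X j) = (\<Sum>j\<in>I. \<mu> (X j))"
proof (induction I rule: finite_induct)
  case empty
  show ?case using mean_additive[of "{}" "{}"] by simp
next
  case (insert j I)
  have "X j \<inter> (\<Union>k\<in>I. X k) = {}"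
    using insert.prems(1) insert.hyps(2) unfolding disjoint_family_on_def by fastforce
  then have "\<mu> (\<Union>k\<in>insert j I. X k) = \<mu> (X j) + \<mu> (\<Union>k\<in>I. X k)"
    using mean_additive insert.prems(2) by (simp add: UN_least)
  then show ?case
    using insert by (simp add: disjoint_family_on_mono[OF subset_insertI])
qed

lemma piecewise_translation_mean:
  assumes C: "finite C" "C \<subseteq> carrier G" and A: "A \<subseteq> carrier G"
    and \<phi>: "\<And>y. y \<in> A \<Longrightarrow> \<phi> y \<in> C" and inj: "inj_on (\<lambda>y. \<phi> y \<otimes> y) A"
  shows "\<mu> ((\<lambda>y. \<phi> y \<otimes> y) ` A) = \<mu> A"
proof -
  define Y where "Y c = {y\<in>A. \<phi> y = c}" for c
  have Y: "Y c \<subseteq> carrier G" for c using A unfolding Y_def by blast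
  have pieces: "c <# Y c \<subseteq> carrier G" if "c \<in> C" for c
    using l_coset_subset_G[OF Y] C(2) that by blast
  have disj: "disjoint_family_on (\<lambda>c. c <# Y c) C"
    unfolding disjoint_family_on_def
  proof (intro ballI impI)
    fix c c' assume "c \<in> C" "c' \<in> C" "c \<noteq> c'"
    show "(c <# Y c) \<inter> (c' <# Y c') = {}"
    proof (rule ccontr)
      assume "(c <# Y c) \<inter> (c' <# Y c') \<noteq> {}"
      then obtain y y' where y: "y \<in> Y c" "y' \<in> Y c'" "c \<otimes> y = c' \<otimes> y'"
        unfolding l_coset_def by blast
      then have "\<phi> y \<otimes> y = \<phi> y' \<otimes> y'" "y \<in> A" "y' \<in> A" unfolding Y_def by auto
      then have "y = y'" by (rule inj_onD[OF inj])
      then show False using y(1,2) \<open>c \<noteq> c'\<close> unfolding Y_def by blast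
    qed
  qed
  have disj_Y: "disjoint_family_on Y C" unfolding disjoint_family_on_def Y_def by blast
  have "(\<lambda>y. \<phi> y \<otimes> y) ` A = (\<Union>c\<in>C. c <# Y c)"
    using \<phi> unfolding Y_def l_coset_def by blast
  then have "\<mu> ((\<lambda>y. \<phi> y \<otimes> y) ` A) = (\<Sum>c\<in>C. \<mu> (c <# Y c))"
    using mean_disjoint_family[OF C(1) disj pieces] by simp
  also have "\<dots> = (\<Sum>c\<in>C. \<mu> (Y c))"
    using mean_invariant Y C(2) by (intro sum.cong) auto
  also have "\<dots> = \<mu> (\<Union>c\<in>C. Y c)"
    using mean_disjoint_family[OF C(1) disj_Y Y] by simp
  also have "(\<Union>c\<in>C. Y c) = A" using \<phi> unfolding Y_def by blast
  finally show ?thesis .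
qed

text \<open>No invariant mean survives a "doubling": an injection of two copies of G into G that moves
  each point by a left translation taken from a fixed finite set.\<close>
lemma no_doubling_map:
  assumes C: "finite C" "C \<subseteq> carrier G"
    and \<phi>: "\<And>p. p \<in> carrier G \<times> (UNIV :: bool set) \<Longrightarrow> \<phi> p \<in> C"
    and inj: "inj_on (\<lambda>p. \<phi> p \<otimes> fst p) (carrier G \<times> (UNIV :: bool set))"
  shows False
proof -
  define copy where "copy i = (\<lambda>y. \<phi> (y, i) \<otimes> y) ` carrier G" for i
  have copy_carrier: "copy i \<subseteq> carrier G" for i using \<phi> C(2) unfolding copy_def by blast
  have "\<mu> (copy i) = 1" for i
  proof -
    have "\<phi> (y, i) \<in> C" if "y \<in> carrier G" for y using \<phi> that by blast
    moreover have "inj_on (\<lambda>y. \<phi> (y, i) \<otimes> y) (carrier G)"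
    proof (rule inj_onI)
      fix y y' assume yy: "y \<in> carrier G" "y' \<in> carrier G" "\<phi> (y, i) \<otimes> y = \<phi> (y', i) \<otimes> y'"
      have "(y, i) = (y', i)" by (rule inj_onD[OF inj]) (use yy in auto)
      then show "y = y'" by simp
    qed
    ultimately show ?thesis
      unfolding copy_def mean_total[symmetric] by (rule piecewise_translation_mean[OF C subset_refl])
  qed
  moreover have "copy True \<inter> copy False = {}"
  proof (rule ccontr)
    assume "copy True \<inter> copy False \<noteq> {}"
    then obtain y y' where yy: "y \<in> carrier G" "y' \<in> carrier G"
      "\<phi> (y, True) \<otimes> y = \<phi> (y', False) \<otimes> y'"
      unfolding copy_def by blast
    have "(y, True) = (y', False)" by (rule inj_onD[OF inj]) (use yy in auto)
    then show False by simp
  qed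
  ultimately have "\<mu> (copy True \<union> copy False) = 2" using mean_additive copy_carrier by simp
  moreover have "\<mu> (copy True \<union> copy False) \<le> 1"
    using mean_mono[of _ "carrier G"] copy_carrier mean_total by simp
  ultimately show False by simp
qed

end

lemma finite_valued_convergent_subseq:
  fixes h :: "nat \<Rightarrow> 'x \<Rightarrow> 'c"
  assumes X: "countable X" and C: "finite C" and h: "\<And>n p. h n p \<in> C"
  shows "\<exists>(r :: nat \<Rightarrow> nat) \<phi>. strict_mono r \<and> (\<forall>p\<in>X. \<exists>N. \<forall>n\<ge>N. h (r n) p = \<phi> p)"
proof -
  define e where "e = from_nat_into X"
  define P where "P k s \<longleftrightarrow> (\<forall>n. h (s n) (e k) = h (s 0) (e k))" for k and s :: "nat \<Rightarrow> nat"
  interpret subseqs P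
  proof
    fix k and s :: "nat \<Rightarrow> nat"
    let ?f = "\<lambda>n. h (s n) (e k)"
    have "finite (range ?f)" using h by (intro finite_subset[OF _ C]) auto
    then obtain v where "infinite (?f -` {v})" by (blast elim: inf_img_fin_domE)
    then obtain r :: "nat \<Rightarrow> nat" where "strict_mono r" "\<forall>n. r n \<in> ?f -` {v}"
      using infinite_enumerate by blast
    then show "\<exists>r. strict_mono r \<and> P k (s \<circ> r)" unfolding P_def by auto
  qed
  have stable: "P k (s \<circ> r)" if "P k s" for k s and r :: "nat \<Rightarrow> nat"
    using that unfolding P_def comp_def by metis
  have stable_diag: "h (diagseq n) (e k) = h (diagseq (Suc k)) (e k)" if "Suc k \<le> n" for n k
  proof -
    have "\<forall>m. h (diagseq (Suc k + m)) (e k) = h (diagseq (Suc k + 0)) (e k)"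
      using diagseq_holds[OF stable, of k] unfolding P_def comp_def .
    then have "h (diagseq (Suc k + (n - Suc k))) (e k) = h (diagseq (Suc k)) (e k)" by simp
    then show ?thesis using that by simp
  qed
  define \<phi> where "\<phi> p = h (diagseq (Suc (SOME k. e k = p))) p" for p
  have "\<exists>N. \<forall>n\<ge>N. h (diagseq n) p = \<phi> p" if "p \<in> X" for p
  proof -
    have "e (SOME k. e k = p) = p" using from_nat_into_surj[OF X that] unfolding e_def by (rule someI_ex)
    then have "\<forall>n\<ge>Suc (SOME k. e k = p). h (diagseq n) p = \<phi> p"
      using stable_diag unfolding \<phi>_def by metis
    then show ?thesis by blast
  qed
  then show ?thesis using subseq_diagseq by blast
qed

lemma injective_limit:
  fixes f :: "'c \<Rightarrow> 'x \<Rightarrow> 'y" and B :: "nat \<Rightarrow> 'x set"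
  assumes X: "countable X" and C: "finite C" "C \<noteq> {}"
    and B_mono: "\<And>m n. m \<le> n \<Longrightarrow> B m \<subseteq> B n" and B_exhaust: "\<And>p. p \<in> X \<Longrightarrow> \<exists>n. p \<in> B n"
    and maps: "\<And>n. \<exists>\<psi>. (\<forall>p\<in>B n. \<psi> p \<in> C) \<and> inj_on (\<lambda>p. f (\<psi> p) p) (B n)"
  shows "\<exists>\<phi>. (\<forall>p\<in>X. \<phi> p \<in> C) \<and> inj_on (\<lambda>p. f (\<phi> p) p) X"
proof -
  obtain c0 where c0: "c0 \<in> C" using C(2) by blast
  have "\<forall>n. \<exists>\<psi>. (\<forall>p\<in>B n. \<psi> p \<in> C) \<and> inj_on (\<lambda>p. f (\<psi> p) p) (B n)" using maps by blast
  from choice[OF this] obtain \<psi> where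
    \<psi>: "\<forall>n. (\<forall>p\<in>B n. \<psi> n p \<in> C) \<and> inj_on (\<lambda>p. f (\<psi> n p) p) (B n)"
    by blast
  define h where "h n p = (if p \<in> B n then \<psi> n p else c0)" for n p
  have h_C: "h n p \<in> C" for n p using \<psi> c0 unfolding h_def by auto
  then obtain r :: "nat \<Rightarrow> nat" and \<phi> where r: "strict_mono r"
    and lim: "\<forall>p\<in>X. \<exists>N. \<forall>n\<ge>N. h (r n) p = \<phi> p"
    using finite_valued_convergent_subseq[OF X C(1)] by metis
  have eventually: "\<exists>N. \<forall>n\<ge>N. p \<in> B (r n) \<and> h (r n) p = \<phi> p" if p: "p \<in> X" for p
  proof -
    obtain N1 where N1: "\<forall>n\<ge>N1. h (r n) p = \<phi> p" using lim p by blast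
    obtain N2 where N2: "p \<in> B N2" using B_exhaust[OF p] by blast
    have "p \<in> B (r n)" if "N2 \<le> n" for n
      using B_mono[of N2 "r n"] seq_suble[OF r, of n] that N2 by auto
    then have "\<forall>n\<ge>max N1 N2. p \<in> B (r n) \<and> h (r n) p = \<phi> p" using N1 by simp
    then show ?thesis by blast
  qed
  have "\<phi> p \<in> C" if p: "p \<in> X" for p
  proof -
    obtain N where "\<forall>n\<ge>N. p \<in> B (r n) \<and> h (r n) p = \<phi> p" using eventually[OF p] by blast
    then show ?thesis using h_C[of "r N" p] by simp
  qed
  moreover have "inj_on (\<lambda>p. f (\<phi> p) p) X"
  proof (rule inj_onI)
    fix p q assume pq: "p \<in> X" "q \<in> X" "f (\<phi> p) p = f (\<phi> q) q"
    obtain m where "p \<in> B (r m)" "h (r m) p = \<phi> p" "q \<in> B (r m)" "h (r m) q = \<phi> q"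
    proof -
      obtain Np Nq where "\<forall>n\<ge>Np. p \<in> B (r n) \<and> h (r n) p = \<phi> p"
        "\<forall>n\<ge>Nq. q \<in> B (r n) \<and> h (r n) q = \<phi> q"
        using eventually[OF pq(1)] eventually[OF pq(2)] by blast
      then show thesis using that[of "max Np Nq"] by simp
    qed
    then have in_m: "p \<in> B (r m)" "q \<in> B (r m)" "f (\<psi> (r m) p) p = f (\<psi> (r m) q) q"
      using pq(3) unfolding h_def by auto
    have "inj_on (\<lambda>p. f (\<psi> (r m) p) p) (B (r m))" using \<psi> by blast
    then show "p = q" by (rule inj_onD) (use in_m in simp_all)
  qed
  ultimately show ?thesis by blast
qed

context cayley
begin

text \<open>Every boundary point of F is a translate by a generator of a point of S F outside F.\<close>
lemma card_boundary_le:
  assumes F: "finite F" "F \<subseteq> carrier G"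
  shows "card (boundary F) \<le> card S * card ((S <#> F) - F)"
proof -
  define D where "D = (S <#> F) - F"
  have finD: "finite D" unfolding D_def using finite_set_mult[OF gens_finite F(1)] by blast
  have "boundary F \<subseteq> (\<Union>s\<in>S. (\<lambda>z. inv s \<otimes> z) ` D)"
  proof
    fix x assume "x \<in> boundary F"
    then obtain s where s: "x \<in> F" "s \<in> S" "s \<otimes> x \<notin> F" unfolding boundary_def by blast
    then have "s \<otimes> x \<in> D" "x = inv s \<otimes> (s \<otimes> x)"
      using F(2) gens_carrier by (auto simp: D_def set_mult_def m_assoc[symmetric] subset_iff)
    then show "x \<in> (\<Union>s\<in>S. (\<lambda>z. inv s \<otimes> z) ` D)" using s(2) by blast
  qed
  then have "card (boundary F) \<le> card (\<Union>s\<in>S. (\<lambda>z. inv s \<otimes> z) ` D)"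
    using gens_finite finD by (intro card_mono) auto
  also have "\<dots> \<le> (\<Sum>s\<in>S. card ((\<lambda>z. inv s \<otimes> z) ` D))" by (rule card_UN_le[OF gens_finite])
  also have "\<dots> \<le> (\<Sum>s\<in>S. card D)" by (intro sum_mono card_image_le finD)
  finally show ?thesis unfolding D_def by simp
qed

lemma card_expand_ge:
  assumes F: "finite F" "F \<subseteq> carrier G"
  shows "card F + card ((S <#> F) - F) \<le> card (insert \<one> S <#> F)"
proof -
  have "F \<union> ((S <#> F) - F) \<subseteq> insert \<one> S <#> F"
    using F(2) by (force simp: set_mult_def)
  moreover have "finite (insert \<one> S <#> F)" using gens_finite F(1) by (intro finite_set_mult) auto
  ultimately have "card (F \<union> ((S <#> F) - F)) \<le> card (insert \<one> S <#> F)" by (rule card_mono[rotated])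
  moreover have "card (F \<union> ((S <#> F) - F)) = card F + card ((S <#> F) - F)"
    using F(1) finite_set_mult[OF gens_finite F(1)] by (intro card_Un_disjoint) auto
  ultimately show ?thesis by linarith
qed

lemma expansion_step:
  assumes no_folner: "\<And>F. \<not> folner_set \<delta> F" and F: "finite F" "F \<subseteq> carrier G"
  shows "(1 + \<delta> / (real (card S) + 1)) * real (card F) \<le> real (card (insert \<one> S <#> F))"
proof (cases "F = {}")
  case False
  define D where "D = (S <#> F) - F"
  have "\<delta> * real (card F) < real (card (boundary F))"
    using no_folner[of F] F False unfolding folner_set_def by auto
  also have "\<dots> \<le> real (card S) * real (card D)"
    using card_boundary_le[OF F] unfolding D_def by (simp flip: of_nat_mult)
  also have "\<dots> \<le> (real (card S) + 1) * real (card D)" by (intro mult_right_mono) auto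
  finally have "\<delta> / (real (card S) + 1) * real (card F) < real (card D)"
    by (simp add: field_simps)
  moreover have "real (card F) + real (card D) \<le> real (card (insert \<one> S <#> F))"
    using card_expand_ge[OF F] unfolding D_def by linarith
  ultimately show ?thesis by (simp add: distrib_right)
qed (simp add: set_mult_def)

primrec word_ball :: "nat \<Rightarrow> 'a set" where
  "word_ball 0 = {\<one>}"
| "word_ball (Suc n) = insert \<one> S <#> word_ball n"

lemma word_ball_finite: "finite (word_ball n)" and word_ball_carrier: "word_ball n \<subseteq> carrier G"
  and one_in_word_ball: "\<one> \<in> word_ball n"
proof -
  show "finite (word_ball n)" by (induction n) (simp_all add: finite_set_mult gens_finite)
  show "word_ball n \<subseteq> carrier G" by (induction n) (simp_all add: setmult_subset_G gens_carrier)
  show "\<one> \<in> word_ball n"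
  proof (induction n)
    case (Suc n)
    then have "\<one> \<otimes> \<one> \<in> insert \<one> S <#> word_ball n" unfolding set_mult_def by blast
    then show ?case by simp
  qed simp
qed

lemma expansion_iterate:
  assumes step: "\<And>F. finite F \<Longrightarrow> F \<subseteq> carrier G \<Longrightarrow> (1 + a) * real (card F) \<le> real (card (insert \<one> S <#> F))"
    and a: "a \<ge> 0" and F: "finite F" "F \<subseteq> carrier G"
  shows "(1 + a) ^ n * real (card F) \<le> real (card (word_ball n <#> F))"
proof (induction n)
  case 0
  then show ?case using F(2) by (simp add: l_coset_eq_set_mult[symmetric] lcos_mult_one)
next
  case (Suc n)
  have fin: "finite (word_ball n <#> F)" "word_ball n <#> F \<subseteq> carrier G"
    using finite_set_mult[OF word_ball_finite F(1)] setmult_subset_G[OF word_ball_carrier F(2)] .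
  have "(1 + a) ^ Suc n * real (card F) \<le> (1 + a) * real (card (word_ball n <#> F))"
    using Suc a by (simp add: mult_left_mono)
  also have "\<dots> \<le> real (card (insert \<one> S <#> (word_ball n <#> F)))" using step[OF fin] .
  also have "insert \<one> S <#> (word_ball n <#> F) = word_ball (Suc n) <#> F"
    using set_mult_assoc[of "insert \<one> S" "word_ball n" F] gens_carrier word_ball_carrier F(2) by simp
  finally show ?case .
qed

lemma doubling_set:
  assumes no_folner: "\<And>F. \<not> folner_set \<delta> F" and "\<delta> > 0"
  shows "\<exists>C. finite C \<and> C \<subseteq> carrier G \<and> C \<noteq> {} \<and>
     (\<forall>F. finite F \<and> F \<subseteq> carrier G \<longrightarrow> 2 * card F \<le> card (C <#> F))"
proof -
  define a where "a = \<delta> / (real (card S) + 1)"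
  have a: "a > 0" unfolding a_def using \<open>\<delta> > 0\<close> by simp
  define n where "n = nat \<lceil>1 / a\<rceil>"
  have "1 / a \<le> real n" unfolding n_def by (rule real_nat_ceiling_ge)
  then have "2 \<le> 1 + real n * a" using a by (simp add: field_simps)
  also have "\<dots> \<le> (1 + a) ^ n" using a by (intro Bernoulli_inequality) simp
  finally have two: "2 \<le> (1 + a) ^ n" .
  have "2 * card F \<le> card (word_ball n <#> F)" if F: "finite F" "F \<subseteq> carrier G" for F
  proof -
    have "2 * real (card F) \<le> (1 + a) ^ n * real (card F)" using two by (intro mult_right_mono) auto
    also have "\<dots> \<le> real (card (word_ball n <#> F))"
      using expansion_iterate[OF expansion_step[OF no_folner, folded a_def] _ F] a by simp
    finally show ?thesis by linarith
  qed
  moreover have "word_ball n \<noteq> {}" using one_in_word_ball by blast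
  ultimately show ?thesis using word_ball_finite word_ball_carrier by (intro exI[of _ "word_ball n"]) blast
qed

text \<open>By Hall's theorem a doubling set allows each point of a finite set F to be moved, twice, by
  left translations from C to pairwise distinct points.\<close>
lemma finite_doubling_map:
  assumes C: "finite C" "C \<subseteq> carrier G"
    and doubling: "\<forall>F. finite F \<and> F \<subseteq> carrier G \<longrightarrow> 2 * card F \<le> card (C <#> F)"
    and F: "finite F" "F \<subseteq> carrier G"
  shows "\<exists>\<phi>. (\<forall>p\<in>F \<times> (UNIV :: bool set). \<phi> p \<in> C) \<and> inj_on (\<lambda>p. \<phi> p \<otimes> fst p) (F \<times> (UNIV :: bool set))"
proof -
  define I where "I = F \<times> (UNIV :: bool set)"
  define A where "A p = (\<lambda>c. c \<otimes> fst p) ` C" for p :: "'a \<times> bool"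
  have "hall_condition I A"
    unfolding hall_condition_def
  proof (intro allI impI)
    fix J assume J: "J \<subseteq> I"
    have "fst ` J \<subseteq> F" using J unfolding I_def by auto
    then have fJ: "finite (fst ` J)" "fst ` J \<subseteq> carrier G" using F by (auto intro: finite_subset)
    have "card J \<le> card (fst ` J \<times> (UNIV :: bool set))"
      using fJ(1) by (intro card_mono) force+
    also have "\<dots> = 2 * card (fst ` J)" by (simp add: card_cartesian_product)
    also have "\<dots> \<le> card (C <#> fst ` J)" using doubling fJ by blast
    also have "C <#> fst ` J = \<Union>(A ` J)" unfolding A_def set_mult_def by auto
    finally show "card J \<le> card (\<Union>(A ` J))" .
  qed
  moreover have "finite I" "\<forall>p\<in>I. finite (A p)" using F(1) C(1) unfolding I_def A_def by auto
  ultimately obtain f where f: "\<forall>p\<in>I. f p \<in> A p" "inj_on f I"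
    using hall_finite by blast
  then have "\<forall>p\<in>I. \<exists>c. c \<in> C \<and> f p = c \<otimes> fst p" unfolding A_def by blast
  from bchoice[OF this] obtain \<phi> where \<phi>: "\<forall>p\<in>I. \<phi> p \<in> C \<and> f p = \<phi> p \<otimes> fst p" by blast
  have "inj_on f I = inj_on (\<lambda>p. \<phi> p \<otimes> fst p) I" using \<phi> by (intro inj_on_cong) blast
  then have "inj_on (\<lambda>p. \<phi> p \<otimes> fst p) I" using f(2) by simp
  then show ?thesis using \<phi> unfolding I_def by (intro exI[of _ \<phi>]) blast
qed

text \<open>Compactness: the finite doubling maps on larger and larger balls converge along a
  subsequence to a doubling map on all of G.\<close>
lemma doubling_map:
  assumes C: "finite C" "C \<subseteq> carrier G" "C \<noteq> {}"
    and doubling: "\<forall>F. finite F \<and> F \<subseteq> carrier G \<longrightarrow> 2 * card F \<le> card (C <#> F)"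
  shows "\<exists>\<phi>. (\<forall>p\<in>carrier G \<times> (UNIV :: bool set). \<phi> p \<in> C) \<and>
     inj_on (\<lambda>p. \<phi> p \<otimes> fst p) (carrier G \<times> (UNIV :: bool set))"
proof (rule injective_limit[where B = "\<lambda>n. ball \<one> n \<times> UNIV", OF _ C(1,3)])
  show "countable (carrier G \<times> (UNIV :: bool set))" using countable_carrier by simp
  show "ball \<one> m \<times> (UNIV :: bool set) \<subseteq> ball \<one> n \<times> UNIV" if "m \<le> n" for m n
    using ball_mono[OF that] by blast
  show "\<exists>n. p \<in> ball \<one> n \<times> (UNIV :: bool set)" if "p \<in> carrier G \<times> (UNIV :: bool set)" for p
    using in_some_ball[of "fst p"] that by (cases p) auto
  show "\<exists>\<psi>. (\<forall>p\<in>ball \<one> n \<times> (UNIV :: bool set). \<psi> p \<in> C) \<and>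
      inj_on (\<lambda>p. \<psi> p \<otimes> fst p) (ball \<one> n \<times> (UNIV :: bool set))" for n
    by (rule finite_doubling_map[OF C(1,2) doubling ball_finite ball_carrier[OF one_closed]])
qed

lemma amenable_folner:
  assumes "amenable G" and "\<delta> > 0"
  shows "\<exists>F. folner_set \<delta> F"
proof (rule ccontr)
  assume "\<nexists>F. folner_set \<delta> F"
  then have no_folner: "\<not> folner_set \<delta> F" for F by blast
  obtain C where C: "finite C" "C \<subseteq> carrier G" "C \<noteq> {}"
    and doubling: "\<forall>F. finite F \<and> F \<subseteq> carrier G \<longrightarrow> 2 * card F \<le> card (C <#> F)"
    using doubling_set[OF no_folner \<open>\<delta> > 0\<close>] by blast
  obtain \<phi> where \<phi>: "\<forall>p\<in>carrier G \<times> (UNIV :: bool set). \<phi> p \<in> C"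
    "inj_on (\<lambda>p. \<phi> p \<otimes> fst p) (carrier G \<times> (UNIV :: bool set))"
    using doubling_map[OF C doubling] by blast
  obtain \<mu> where \<mu>: "invariant_mean G \<mu>"
    using amenable_invariant_mean[OF is_group \<open>amenable G\<close>] by blast
  show False using invariant_mean.no_doubling_map[OF \<mu> C(1,2) _ \<phi>(2)] \<phi>(1) by blast
qed

text \<open>Amenable groups are weighted hyperfinite: cut along a Folner set of ratio \<epsilon>.\<close>
lemma amenable_weighted_hyperfinite:
  assumes "amenable G"
  shows "weighted_hyperfinite (carrier G) E"
  unfolding weighted_hyperfinite_def
proof (intro allI impI)
  fix \<epsilon> :: real assume "\<epsilon> > 0"
  then obtain F where F: "folner_set \<epsilon> F" using amenable_folner[OF assms] by blast
  then have "card F > 0" unfolding folner_set_def by (simp add: card_gt_0_iff)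
  moreover have "\<exists>M\<subseteq>L. sum w M \<le> \<epsilon> * sum w L \<and> (\<forall>C\<in>components E (L - M). card C \<le> card F)"
    if "finite L \<and> L \<subseteq> carrier G" "\<forall>x\<in>L. 0 \<le> w x" for L and w :: "'a \<Rightarrow> real"
    using folner_cut[OF F] that by blast
  ultimately show "\<exists>K>0. \<forall>L. finite L \<and> L \<subseteq> carrier G \<longrightarrow> (\<forall>w. (\<forall>x\<in>L. 0 \<le> w x) \<longrightarrow>
      (\<exists>M\<subseteq>L. sum w M \<le> \<epsilon> * sum w L \<and> (\<forall>C\<in>components E (L - M). card C \<le> K)))"
    by (intro exI[of _ "card F"]) blast
qed

lemma path_comparison:
  assumes S': "fin_sym_gen_set G S'"
  shows "\<exists>l::nat. l \<ge> 1 \<and> (\<forall>n x y. (E ^^ n) x y \<longrightarrow> (\<exists>k\<le>l * n. (cayley_adj G S' ^^ k) x y))"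
proof -
  interpret S': cayley G S' by unfold_locales (rule S')
  define len where "len s = (LEAST k. (S'.E ^^ k) s \<one>)" for s
  have len: "(S'.E ^^ len s) s \<one>" if "s \<in> S" for s
  proof -
    have "s \<in> carrier G" using that gens_carrier by blast
    then have "\<exists>k. (S'.E ^^ k) s \<one>" by (rule S'.path_to_one)
    then show ?thesis unfolding len_def by (rule LeastI_ex)
  qed
  define l where "l = Max (insert 1 (len ` S))"
  have l: "l \<ge> 1" "\<And>s. s \<in> S \<Longrightarrow> len s \<le> l" unfolding l_def using gens_finite by auto
  have edge: "\<exists>k\<le>l. (S'.E ^^ k) x y" if xy: "E x y" for x y
  proof -
    obtain s where s: "s \<in> S" "x = s \<otimes> y" "y \<in> carrier G" using xy unfolding cayley_adj_def by auto
    then have "(S'.E ^^ len s) x y" using S'.adjpow_right_mult[OF len[OF s(1)] s(3)] by simp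
    then show ?thesis using l(2)[OF s(1)] by blast
  qed
  have "\<forall>x y. (E ^^ n) x y \<longrightarrow> (\<exists>k\<le>l * n. (S'.E ^^ k) x y)" for n
  proof (induction n)
    case (Suc n)
    show ?case
    proof (intro allI impI)
      fix x z assume "(E ^^ Suc n) x z"
      then obtain y where y: "(E ^^ n) x y" "E y z" by (auto elim: relpowp_Suc_E)
      obtain k1 where k1: "k1 \<le> l * n" "(S'.E ^^ k1) x y" using Suc y(1) by blast
      obtain k2 where k2: "k2 \<le> l" "(S'.E ^^ k2) y z" using edge[OF y(2)] by blast
      have "(S'.E ^^ (k1 + k2)) x z" using relpowp_trans[OF k1(2) k2(2)] .
      moreover have "k1 + k2 \<le> l * Suc n" using k1 k2 by simp
      ultimately show "\<exists>k\<le>l * Suc n. (S'.E ^^ k) x z" by blast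
    qed
  qed simp
  then show ?thesis using l(1) by blast
qed

definition dist_to :: "'a set \<Rightarrow> 'a \<Rightarrow> nat" where
  "dist_to U x = (LEAST n. \<exists>u\<in>U. (E ^^ n) x u)"

lemma dist_to_le: "(E ^^ n) x u \<Longrightarrow> u \<in> U \<Longrightarrow> dist_to U x \<le> n"
  unfolding dist_to_def by (rule Least_le) blast

lemma dist_to_path: "(E ^^ n) x u \<Longrightarrow> u \<in> U \<Longrightarrow> \<exists>u'\<in>U. (E ^^ dist_to U x) x u'"
  unfolding dist_to_def by (rule LeastI_ex) blast

end

lemma light_layer:
  fixes w :: "'x \<Rightarrow> real" and D :: "'x \<Rightarrow> nat"
  assumes L: "finite L" "\<forall>x\<in>L. 0 \<le> w x" and m: "m \<ge> 1"
  shows "\<exists>k. 1 \<le> k \<and> k \<le> m \<and> sum w {x\<in>L. D x = k} \<le> sum w L / m"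
proof (rule ccontr)
  assume "\<not> ?thesis"
  then have heavy: "sum w L / m < sum w {x\<in>L. D x = k}" if "k \<in> {1..m}" for k
    using that by force
  have "real m * (sum w L / m) = (\<Sum>k\<in>{1..m}. sum w L / m)" by simp
  also have "\<dots> < (\<Sum>k\<in>{1..m}. sum w {x\<in>L. D x = k})"
    using heavy m by (intro sum_strict_mono) auto
  also have "\<dots> = sum w (\<Union>k\<in>{1..m}. {x\<in>L. D x = k})"
    using L(1) by (intro sum.UNION_disjoint[symmetric]) auto
  also have "\<dots> \<le> sum w L" using L by (intro sum_mono2) auto
  finally show False using m by simp
qed

lemma light_layers:
  fixes w :: "'x \<Rightarrow> real" and D :: "nat \<Rightarrow> 'x \<Rightarrow> nat"
  assumes L: "finite L" "\<forall>x\<in>L. 0 \<le> w x" and m: "m \<ge> 1" "real d \<le> \<epsilon> * real m"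
  shows "\<exists>kk. (\<forall>i. 1 \<le> kk i \<and> kk i \<le> m) \<and> sum w (\<Union>i<d. {x\<in>L. D i x = kk i}) \<le> \<epsilon> * sum w L"
proof -
  have "\<forall>i. \<exists>k. 1 \<le> k \<and> k \<le> m \<and> sum w {x\<in>L. D i x = k} \<le> sum w L / m"
    using light_layer[OF L m(1)] by blast
  from choice[OF this] obtain kk
    where kk: "\<And>i. 1 \<le> kk i \<and> kk i \<le> m \<and> sum w {x\<in>L. D i x = kk i} \<le> sum w L / m"
    by blast
  have "sum w (\<Union>i<d. {x\<in>L. D i x = kk i}) \<le> (\<Sum>i<d. sum w {x\<in>L. D i x = kk i})"
    using L by (intro sum_UN_le_nonneg) auto
  also have "\<dots> \<le> (\<Sum>i<d. sum w L / m)" using kk by (intro sum_mono) blast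
  also have "\<dots> = real d / real m * sum w L" by simp
  also have "\<dots> \<le> \<epsilon> * sum w L"
  proof (rule mult_right_mono)
    show "real d / real m \<le> \<epsilon>" using m by (simp add: field_simps)
    show "0 \<le> sum w L" using L by (intro sum_nonneg) blast
  qed
  finally show ?thesis using kk by (intro exI[of _ kk]) blast
qed

text \<open>Two Cayley graphs of the same group: S0 is the generating set in which the asymptotic
  dimension is given, S the one in which hyperfiniteness is to be shown.\<close>
locale cayley_pair = cayley G S + ref: cayley G S0 for G (structure) and S S0

context cayley_pair
begin

lemma stays_near_component:
  assumes lip: "\<forall>n x y. (E ^^ n) x y \<longrightarrow> (\<exists>k'\<le>l * n. (ref.E ^^ k') x y)"
    and sep: "\<forall>C1\<in>components ref.E U. \<forall>C2\<in>components ref.E U. C1 \<noteq> C2 \<longrightarrow>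
                (\<forall>x\<in>C1. \<forall>y\<in>C2. r \<le> gdist ref.E x y)"
    and r: "l * (2 * m) < r" and k: "0 < k" "k \<le> m"
    and cut: "{x\<in>L. dist_to U x = k} \<subseteq> M"
    and C0: "C0 \<in> components ref.E U" "x0 \<in> C0"
    and reach: "reach_in E (L - M) x0 y"
  shows "\<exists>n<k. \<exists>u\<in>C0. (E ^^ n) y u"
  using reach unfolding reach_in_def
proof (induction rule: rtranclp_induct)
  case base
  show ?case using C0(2) k(1) by (intro exI[of _ 0]) auto
next
  case (step y z)
  obtain n u where nu: "n < k" "u \<in> C0" "(E ^^ n) y u" using step.IH by blast
  have z: "z \<in> L" "z \<notin> M" "E z y" using step.hyps(2) adj_sym by auto
  have zu: "(E ^^ Suc n) z u" using relpowp_Suc_I2[OF z(3) nu(3)] .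
  have "u \<in> U" using nu(2) C0(1) components_subset by blast
  then have "dist_to U z \<le> Suc n" using dist_to_le[OF zu] by blast
  moreover have "dist_to U z \<noteq> k" using z(1,2) cut by blast
  ultimately have near: "dist_to U z < k" using nu(1) by linarith
  obtain u' where u': "u' \<in> U" "(E ^^ dist_to U z) z u'" using dist_to_path[OF zu \<open>u \<in> U\<close>] by blast
  define C' where "C' = {v. v \<in> U \<and> reach_in ref.E U u' v}"
  have C': "C' \<in> components ref.E U" "u' \<in> C'"
    unfolding C'_def components_def reach_in_def using u'(1) by auto
  have "(E ^^ (Suc n + dist_to U z)) u u'" using relpowp_trans[OF adjpow_sym[OF zu] u'(2)] .
  then obtain k' where k': "k' \<le> l * (Suc n + dist_to U z)" "(ref.E ^^ k') u u'" using lip by blast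
  moreover have "l * (Suc n + dist_to U z) \<le> l * (2 * m)"
    using nu(1) near k(2) by (intro mult_le_mono2) linarith
  ultimately have "gdist ref.E u u' < r" using gdist_le[OF k'(2)] r by linarith
  have "C' = C0"
  proof (rule ccontr)
    assume "C' \<noteq> C0"
    then have "r \<le> gdist ref.E u u'" using sep C0(1) C' nu(2) by blast
    then show False using \<open>gdist ref.E u u' < r\<close> by simp
  qed
  then show ?case using near u'(2) C'(2) by (intro exI[of _ "dist_to U z"]) blast
qed

lemma near_component_in_ball:
  assumes lip': "\<forall>n x y. (ref.E ^^ n) x y \<longrightarrow> (\<exists>k\<le>l' * n. (E ^^ k) x y)"
    and diam: "\<forall>x\<in>C0. \<forall>y\<in>C0. gdist ref.E x y \<le> R" and C0: "C0 \<subseteq> carrier G" "x0 \<in> C0"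
    and near: "\<exists>n<k. \<exists>u\<in>C0. (E ^^ n) y u" and "k \<le> m"
  shows "y \<in> ball x0 (l' * R + m)"
proof -
  obtain n u where nu: "n < k" "u \<in> C0" "(E ^^ n) y u" using near by blast
  have "(ref.E ^^ gdist ref.E x0 u) x0 u"
    using C0 nu(2) by (intro gdist_path ref.connected) auto
  then obtain k' where k': "k' \<le> l' * gdist ref.E x0 u" "(E ^^ k') x0 u" using lip' by blast
  have "(E ^^ (k' + n)) x0 y" using relpowp_trans[OF k'(2) adjpow_sym[OF nu(3)]] .
  moreover have "k' + n \<le> l' * R + m"
    using k' nu(1) \<open>k \<le> m\<close> mult_le_mono2[OF diam[rule_format, OF C0(2) nu(2)], of l'] by linarith
  ultimately show ?thesis unfolding ball_def by blast
qed

lemma layered_cut_components: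
  assumes lip: "\<forall>n x y. (E ^^ n) x y \<longrightarrow> (\<exists>k\<le>l * n. (ref.E ^^ k) x y)"
    and lip': "\<forall>n x y. (ref.E ^^ n) x y \<longrightarrow> (\<exists>k\<le>l' * n. (E ^^ k) x y)"
    and cover: "(\<Union>i<d. U i) = carrier G"
    and diam: "\<forall>i<d. \<forall>C\<in>components ref.E (U i). \<forall>x\<in>C. \<forall>y\<in>C. gdist ref.E x y \<le> R"
    and sep: "\<forall>i<d. \<forall>C1\<in>components ref.E (U i). \<forall>C2\<in>components ref.E (U i). C1 \<noteq> C2 \<longrightarrow>
                (\<forall>x\<in>C1. \<forall>y\<in>C2. r \<le> gdist ref.E x y)"
    and r: "l * (2 * m) < r" and kk: "\<And>i. 1 \<le> kk i \<and> kk i \<le> m"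
    and cut: "\<And>i. i < d \<Longrightarrow> {x\<in>L. dist_to (U i) x = kk i} \<subseteq> M"
    and L: "L \<subseteq> carrier G" and C: "C \<in> components E (L - M)"
  shows "card C \<le> (\<Sum>j\<le>l' * R + m. card S ^ j)"
proof -
  obtain x0 where x0: "x0 \<in> L - M" and C_eq: "C = {y. y \<in> L - M \<and> reach_in E (L - M) x0 y}"
    using C unfolding components_def by blast
  then obtain j where j: "j < d" "x0 \<in> U j" using L cover by blast
  define C0 where "C0 = {y. y \<in> U j \<and> reach_in ref.E (U j) x0 y}"
  have C0: "C0 \<in> components ref.E (U j)" "x0 \<in> C0" "C0 \<subseteq> carrier G"
    unfolding C0_def components_def reach_in_def using j cover by auto
  have "C \<subseteq> ball x0 (l' * R + m)"
  proof
    fix y assume "y \<in> C"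
    then have "reach_in E (L - M) x0 y" unfolding C_eq by blast
    then have "\<exists>n<kk j. \<exists>u\<in>C0. (E ^^ n) y u"
      using stays_near_component[OF lip _ r _ _ cut[OF j(1)] C0(1,2)] sep j(1) kk[of j] by simp
    then show "y \<in> ball x0 (l' * R + m)"
      using near_component_in_ball[OF lip' _ C0(3,2)] diam j(1) C0(1) kk[of j] by blast
  qed
  then have "card C \<le> card (ball x0 (l' * R + m))" by (intro card_mono ball_finite)
  also have "\<dots> \<le> (\<Sum>j\<le>l' * R + m. card S ^ j)" by (rule card_ball_le)
  finally show ?thesis .
qed

text \<open>Finite asymptotic dimension implies weighted hyperfiniteness: with d pieces and m candidate
  layers per piece, removing the lightest layer around each piece costs at most d/m of the weight.\<close>
lemma asdim_weighted_hyperfinite: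
  assumes asdim: "asdim_le (carrier G) ref.E d"
  shows "weighted_hyperfinite (carrier G) E"
  unfolding weighted_hyperfinite_def
proof (intro allI impI)
  fix \<epsilon> :: real assume "\<epsilon> > 0"
  obtain l where lip: "\<forall>n x y. (E ^^ n) x y \<longrightarrow> (\<exists>k\<le>l * n. (ref.E ^^ k) x y)"
    using path_comparison[OF ref.fin_sym_gen] by blast
  obtain l' where lip': "\<forall>n x y. (ref.E ^^ n) x y \<longrightarrow> (\<exists>k\<le>l' * n. (E ^^ k) x y)"
    using ref.path_comparison[OF fin_sym_gen] by blast
  define m :: nat where "m = nat \<lceil>real d / \<epsilon>\<rceil> + 1"
  have "real d / \<epsilon> \<le> real m" unfolding m_def by linarith
  then have m: "m \<ge> 1" "real d \<le> \<epsilon> * real m"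
    using \<open>\<epsilon> > 0\<close> unfolding m_def by (auto simp: field_simps)
  define r where "r = l * (2 * m) + 1"
  have "r > 0" unfolding r_def by simp
  obtain R U where "(\<Union>i<d. U i) = carrier G \<and> (\<forall>i<d. \<forall>j<d. i \<noteq> j \<longrightarrow> U i \<inter> U j = {}) \<and>
      (\<forall>i<d. (\<forall>C\<in>components ref.E (U i). \<forall>x\<in>C. \<forall>y\<in>C. gdist ref.E x y \<le> R) \<and>
        (\<forall>C1\<in>components ref.E (U i). \<forall>C2\<in>components ref.E (U i). C1 \<noteq> C2 \<longrightarrow>
          (\<forall>x\<in>C1. \<forall>y\<in>C2. r \<le> gdist ref.E x y)))"
    using asdim[unfolded asdim_le_def, rule_format, OF \<open>r > 0\<close>] by (elim exE) (rule that)
  then have cover: "(\<Union>i<d. U i) = carrier G"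
    and diam: "\<forall>i<d. \<forall>C\<in>components ref.E (U i). \<forall>x\<in>C. \<forall>y\<in>C. gdist ref.E x y \<le> R"
    and sep: "\<forall>i<d. \<forall>C1\<in>components ref.E (U i). \<forall>C2\<in>components ref.E (U i). C1 \<noteq> C2 \<longrightarrow>
                (\<forall>x\<in>C1. \<forall>y\<in>C2. r \<le> gdist ref.E x y)"
    by simp_all
  define K where "K = (\<Sum>j\<le>l' * R + m. card S ^ j)"
  have "K > 0" unfolding K_def by (simp add: sum_pos2[of _ 0])
  moreover have "\<exists>M\<subseteq>L. sum w M \<le> \<epsilon> * sum w L \<and> (\<forall>C\<in>components E (L - M). card C \<le> K)"
    if L: "finite L \<and> L \<subseteq> carrier G" and w: "\<forall>x\<in>L. 0 \<le> w x" for L and w :: "'a \<Rightarrow> real"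
  proof -
    have "finite L" using L by blast
    from light_layers[OF this w m, of "\<lambda>i. dist_to (U i)"]
    obtain kk where kk: "\<And>i. 1 \<le> kk i \<and> kk i \<le> m"
      and weight: "sum w (\<Union>i<d. {x\<in>L. dist_to (U i) x = kk i}) \<le> \<epsilon> * sum w L"
      by blast
    define M where "M = (\<Union>i<d. {x\<in>L. dist_to (U i) x = kk i})"
    have "sum w M \<le> \<epsilon> * sum w L" using weight unfolding M_def .
    moreover have "card C \<le> K" if "C \<in> components E (L - M)" for C
    proof -
      have r_gt: "l * (2 * m) < r" unfolding r_def by simp
      have cut: "{x\<in>L. dist_to (U i) x = kk i} \<subseteq> M" if "i < d" for i
        unfolding M_def using that by blast
      have L': "L \<subseteq> carrier G" using L by blast
      show ?thesis
        using layered_cut_components[OF lip lip' cover diam sep r_gt kk cut L' that] unfolding K_def .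
    qed
    moreover have "M \<subseteq> L" unfolding M_def by blast
    ultimately show ?thesis by blast
  qed
  ultimately show "\<exists>K>0. \<forall>L. finite L \<and> L \<subseteq> carrier G \<longrightarrow> (\<forall>w. (\<forall>x\<in>L. 0 \<le> w x) \<longrightarrow>
      (\<exists>M\<subseteq>L. sum w M \<le> \<epsilon> * sum w L \<and> (\<forall>C\<in>components E (L - M). card C \<le> K)))"
    by (intro exI[of _ K]) blast
qed

end

theorem theorem1p2:
  fixes G :: "('a, 'b) monoid_scheme"
  assumes "group G"
    and "finitely_generated G"
    and "amenable G \<or> finite_asdim G"
  shows "\<forall>S. fin_sym_gen_set G S \<longrightarrow> weighted_hyperfinite (carrier G) (cayley_adj G S)"
proof (intro allI impI)
  fix S assume S: "fin_sym_gen_set G S"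
  interpret cayley G S by (intro cayley.intro cayley_axioms.intro assms(1) S)
  show "weighted_hyperfinite (carrier G) (cayley_adj G S)"
    using assms(3)
  proof
    assume "amenable G"
    then show ?thesis by (rule amenable_weighted_hyperfinite)
  next
    assume "finite_asdim G"
    then obtain S0 d where S0: "fin_sym_gen_set G S0" and "asdim_le (carrier G) (cayley_adj G S0) d"
      unfolding finite_asdim_def by blast
    interpret cayley_pair G S S0 by (intro cayley_pair.intro cayley.intro cayley_axioms.intro assms(1) S S0)
    show ?thesis by (rule asdim_weighted_hyperfinite) fact
  qed
qed

end
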